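(* Let $d,m,N$ be positive integers, let $0<\Lambda_1<\dots<\Lambda_N$ be real numbers, let $A_1,\dots,A_N\in\mathbb{R}^{d\times d}$, $B\in\mathbb{R}^{d\times m}$, $g\in L^\infty([0,\Lambda_N],\mathbb{R}^{d\times d})$, and let $q\in[1,+\infty)$. Consider the control system $$x(t)=\sum_{j=1}^N A_j x(t-\Lambda_j)+\int_0^{\Lambda_N} g(s)x(t-s)\,ds+Bu(t),\qquad t\ge 0. \quad (\Sigma)$$ Let $T>0$. Then $(\Sigma)$ is $L^q$ approximately controllable from the origin in time $T$ if and only if it is $L^q$ approximately controllable in time $T$.
   Context: For every $T\ge 0$, $\phi\in L^q([-\Lambda_N,0],\mathbb{R}^d)$ and $u\in L^q([0,T],\mathbb{R}^m)$, there is a unique $x\in L^q([-\Lambda_N,T],\mathbb{R}^d)$ with $x(\theta)=\phi(\theta)$ for $\theta\in[-\Lambda_N,0]$ satisfying $(\Sigma)$ for almost every $t\in[0,T]$; this is the solution associated with $(\phi,u)$. For $t\in[0,T]$, $x_t\in L^q([-\Lambda_N,0],\mathbb{R}^d)$ denotes $x_t(\theta)=x(t+\theta)$, and $\|\cdot\|_{[-\Lambda_N,0],q}$ is the $L^q$ norm on $[-\Lambda_N,0]$. $(\Sigma)$ is $L^q$ approximately controllable in time $T>0$ if for every $\phi,\psi\in L^q([-\Lambda_N,0],\mathbb{R}^d)$ and $\epsilon>0$ there exists $u\in L^q([0,T],\mathbb{R}^m)$ such that the associated solution satisfies $\|x_T-\psi\|_{[-\Lambda_N,0],q}<\epsilon$.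 It is $L^q$ approximately controllable from the origin in time $T>0$ if the same holds with $\phi\equiv 0$ fixed (for every $\psi$ and $\epsilon>0$). *)

theory Defs
  imports "HOL-Analysis.Analysis"
begin

definition Lq_on :: "real \<Rightarrow> real \<Rightarrow> real \<Rightarrow> (real \<Rightarrow> 'a::euclidean_space) \<Rightarrow> bool" where
  "Lq_on q a b f \<longleftrightarrow> f \<in> borel_measurable (lebesgue_on {a..b}) \<and>
     integrable (lebesgue_on {a..b}) (\<lambda>t. norm (f t) powr q)"

definition Lq_norm :: "real \<Rightarrow> real \<Rightarrow> real \<Rightarrow> (real \<Rightarrow> 'a::euclidean_space) \<Rightarrow> real" where
  "Lq_norm q a b f = (\<integral>t. norm (f t) powr q \<partial>lebesgue_on {a..b}) powr (1 / q)"

definition Linf_on :: "real \<Rightarrow> real \<Rightarrow> (real \<Rightarrow> 'a::euclidean_space) \<Rightarrow> bool" where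
  "Linf_on a b f \<longleftrightarrow> f \<in> borel_measurable (lebesgue_on {a..b}) \<and>
     (\<exists>C. AE t in lebesgue_on {a..b}. norm (f t) \<le> C)"

definition is_solution ::
  "nat \<Rightarrow> (nat \<Rightarrow> real) \<Rightarrow> (nat \<Rightarrow> real^'d^'d) \<Rightarrow> (real \<Rightarrow> real^'d^'d) \<Rightarrow> real^'m^'d \<Rightarrow> real
   \<Rightarrow> real \<Rightarrow> (real \<Rightarrow> real^'d) \<Rightarrow> (real \<Rightarrow> real^'m) \<Rightarrow> (real \<Rightarrow> real^'d) \<Rightarrow> bool" where
  "is_solution N \<Lambda> A g B q T \<phi> u x \<longleftrightarrow>
     Lq_on q (- \<Lambda> N) T x \<and> (\<forall>\<theta>\<in>{- \<Lambda> N..0}. x \<theta> = \<phi> \<theta>) \<and>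
     (AE t in lebesgue_on {0..T}.
        x t = (\<Sum>j=1..N. A j *v x (t - \<Lambda> j))
              + (\<integral>s. g s *v x (t - s) \<partial>lebesgue_on {0..\<Lambda> N})
              + B *v u t)"

definition approx_controllable ::
  "nat \<Rightarrow> (nat \<Rightarrow> real) \<Rightarrow> (nat \<Rightarrow> real^'d^'d) \<Rightarrow> (real \<Rightarrow> real^'d^'d) \<Rightarrow> real^'m^'d \<Rightarrow> real
   \<Rightarrow> real \<Rightarrow> bool" where
  "approx_controllable N \<Lambda> A g B q T \<longleftrightarrow>
     (\<forall>\<phi> \<psi> \<epsilon>. Lq_on q (- \<Lambda> N) 0 \<phi> \<longrightarrow> Lq_on q (- \<Lambda> N) 0 \<psi> \<longrightarrow> \<epsilon> > 0 \<longrightarrow>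
        (\<exists>u x. Lq_on q 0 T (u :: real \<Rightarrow> real^'m) \<and> is_solution N \<Lambda> A g B q T \<phi> u x \<and>
               Lq_norm q (- \<Lambda> N) 0 (\<lambda>\<theta>. x (T + \<theta>) - \<psi> \<theta>) < \<epsilon>))"

definition approx_controllable_from_origin ::
  "nat \<Rightarrow> (nat \<Rightarrow> real) \<Rightarrow> (nat \<Rightarrow> real^'d^'d) \<Rightarrow> (real \<Rightarrow> real^'d^'d) \<Rightarrow> real^'m^'d \<Rightarrow> real
   \<Rightarrow> real \<Rightarrow> bool" where
  "approx_controllable_from_origin N \<Lambda> A g B q T \<longleftrightarrow>
     (\<forall>\<psi> \<epsilon>. Lq_on q (- \<Lambda> N) 0 \<psi> \<longrightarrow> \<epsilon> > 0 \<longrightarrow>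
        (\<exists>u x. Lq_on q 0 T (u :: real \<Rightarrow> real^'m) \<and> is_solution N \<Lambda> A g B q T (\<lambda>_. 0) u x \<and>
               Lq_norm q (- \<Lambda> N) 0 (\<lambda>\<theta>. x (T + \<theta>) - \<psi> \<theta>) < \<epsilon>))"

end

theory Submission
  imports Defs "HOL-Real_Asymp.Real_Asymp"
begin

(* Controllability implies controllability from the origin trivially (take phi = 0). Conversely,
   (Sigma) is linear: if y is the free motion from phi (control 0), a control steering the origin
   to within epsilon of psi - y_T steers phi to within epsilon of psi, by superposition.

   The substance is the existence of the free motion. It is built in two stages. The pure
   difference equation x(t) = sum_j A_j x(t - Lambda_j) is solved by the method of steps: since
   every delay is at least Lambda_1 > 0, finitely many iterations reach a fixed point. This
   absorbs the initial function, which is only L^q. The remaining correction r, driven by the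
   distributed delay applied to that solution, is bounded; it is the fixed point of a map that
   halves the weighted norm sup_t |h t| e^(-gamma t) once gamma is large, since the delays
   contribute a factor e^(-gamma Lambda_1) and the L^infinity kernel a factor 1/gamma. *)

section \<open>Matrices and Lebesgue measure on the real line\<close>

lemma norm_matrix_vector_mult_le:
  fixes M :: "real^'n^'m"
  shows "norm (M *v x) \<le> norm M * norm x"
proof -
  have "(norm (M *v x)) ^ 2 = (\<Sum>i\<in>UNIV. (M $ i \<bullet> x) ^ 2)"
    by (simp add: norm_vec_def L2_set_def matrix_vector_mult_def inner_vec_def sum_nonneg)
  also have "\<dots> \<le> (\<Sum>i\<in>UNIV. (norm (M $ i) * norm x) ^ 2)"
    by (intro sum_mono) (metis Cauchy_Schwarz_ineq2 abs_le_square_iff abs_mult abs_norm_cancel)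
  also have "\<dots> = (norm M * norm x) ^ 2"
    by (simp add: power_mult_distrib sum_distrib_right[symmetric] norm_vec_def L2_set_def sum_nonneg)
  finally show ?thesis
    by simp
qed

lemma borel_measurable_matrix_vector_mult [measurable (raw)]:
  fixes f :: "'a \<Rightarrow> real^'n^'m" and v :: "'a \<Rightarrow> real^'n"
  assumes "f \<in> borel_measurable M" "v \<in> borel_measurable M"
  shows "(\<lambda>x. f x *v v x) \<in> borel_measurable M"
proof -
  have "continuous_on UNIV (\<lambda>w::(real^'n^'m) \<times> (real^'n). fst w *v snd w)"
    unfolding matrix_vector_mult_def by (intro continuous_intros)
  from borel_measurable_continuous_on[OF this borel_measurable_Pair[OF assms]] show ?thesis
    by simp
qed

lemma AE_lebesgue_affine:
  fixes P :: "real \<Rightarrow> bool"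
  assumes "AE x in lebesgue. P x" "c \<noteq> 0"
  shows "AE x in lebesgue. P (t + c * x)"
proof -
  obtain Z where Z: "Z \<in> null_sets lborel" "{x. \<not> P x} \<subseteq> Z"
    using assms(1) unfolding AE_completion_iff by (auto elim!: AE_E simp: null_sets_def)
  have "AE x in lborel. x \<notin> Z"
    using Z(1) by (rule AE_not_in)
  then have "AE x in lborel. t + c * x \<notin> Z"
    using Z(1) assms(2) by (intro AE_borel_affine) auto
  then have "AE x in lebesgue. t + c * x \<notin> Z"
    by (rule AE_completion)
  then show ?thesis
    by (rule AE_mp) (use Z(2) in \<open>auto intro!: AE_I2\<close>)
qed

lemma AE_lebesgue_on_if_AE_lebesgue:
  fixes P :: "'a::euclidean_space \<Rightarrow> bool"
  assumes "AE x in lebesgue. P x" "S \<in> sets lebesgue"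
  shows "AE x in lebesgue_on S. P x"
  using assms by (subst AE_restrict_space_iff) (auto elim: AE_mp)

lemma lebesgue_measurable_AE_eq_borel:
  fixes f :: "real \<Rightarrow> 'a::euclidean_space"
  assumes "f \<in> borel_measurable lebesgue"
  obtains f' where "f' \<in> borel_measurable borel" "AE t in lebesgue. f t = f' t"
proof -
  have "\<exists>h \<in> borel_measurable lborel. AE t in lborel. f t \<bullet> b = h t" for b
    using assms by (intro completion_ex_borel_measurable_real borel_measurable_inner) auto
  then obtain F where F: "\<And>b. F b \<in> borel_measurable borel" "\<And>b. AE t in lborel. f t \<bullet> b = F b t"
    by (metis measurable_lborel2)
  have "(\<lambda>t. \<Sum>b\<in>Basis. F b t *\<^sub>R b) \<in> borel_measurable borel"
    using F(1) by measurable
  moreover have "AE t in lborel. \<forall>b\<in>Basis. f t \<bullet> b = F b t"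
    by (intro AE_finite_allI) (auto simp: F)
  then have "AE t in lborel. f t = (\<Sum>b\<in>Basis. F b t *\<^sub>R b)"
    by (rule AE_mp) (auto intro!: AE_I2, metis (no_types, lifting) euclidean_representation sum.cong)
  then have "AE t in lebesgue. f t = (\<Sum>b\<in>Basis. F b t *\<^sub>R b)"
    by (rule AE_completion)
  ultimately show ?thesis
    using that by blast
qed

section \<open>\<open>L\<^sup>q\<close> functions on the real line\<close>

definition Lq :: "real \<Rightarrow> (real \<Rightarrow> 'a::euclidean_space) \<Rightarrow> bool" where
  "Lq p f \<longleftrightarrow> f \<in> borel_measurable lebesgue \<and> integrable lebesgue (\<lambda>t. norm (f t) powr p)"

lemma Lq_on_iff_Lq_zero_extension:
  "Lq_on p a b f \<longleftrightarrow> Lq p (\<lambda>t. if t \<in> {a..b} then f t else 0)"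
proof -
  have S: "{a..b} \<in> sets lebesgue"
    by simp
  have "(\<lambda>t. norm (if t \<in> {a..b} then f t else 0) powr p) = (\<lambda>t. if t \<in> {a..b} then norm (f t) powr p else 0)"
    by auto
  then show ?thesis
    unfolding Lq_on_def Lq_def by (simp only: borel_measurable_if[OF S] Lebesgue_Measure.integrable_restrict_UNIV[OF S])
qed

lemma Lq_zero [simp]: "Lq p (\<lambda>t. 0)"
  by (simp add: Lq_def)

lemma Lq_cong_AE:
  assumes "Lq p f" "AE t in lebesgue. f t = h t" "h \<in> borel_measurable lebesgue"
  shows "Lq p h"
proof -
  have "AE t in lebesgue. norm (f t) powr p = norm (h t) powr p"
    using assms(2) by eventually_elim simp
  then have "integrable lebesgue (\<lambda>t. norm (h t) powr p)"
    using assms(1,3) unfolding Lq_def by (auto intro: integrable_cong_AE_imp)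
  then show ?thesis
    using assms(3) unfolding Lq_def by simp
qed

lemma powr_add_le:
  fixes a b p :: real
  assumes "0 \<le> a" "0 \<le> b" "0 < p"
  shows "(a + b) powr p \<le> 2 powr p * (a powr p + b powr p)"
proof -
  have "(a + b) powr p \<le> (2 * max a b) powr p"
    using assms by (intro powr_mono2) auto
  also have "\<dots> = 2 powr p * max a b powr p"
    using assms by (simp add: powr_mult)
  also have "\<dots> \<le> 2 powr p * (a powr p + b powr p)"
    using assms by (intro mult_left_mono) (auto simp: max_def)
  finally show ?thesis .
qed

lemma Lq_add:
  assumes "Lq p f" "Lq p h" "0 < p"
  shows "Lq p (\<lambda>t. f t + h t)"
  unfolding Lq_def
proof
  show m: "(\<lambda>t. f t + h t) \<in> borel_measurable lebesgue"
    using assms unfolding Lq_def by auto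
  show "integrable lebesgue (\<lambda>t. norm (f t + h t) powr p)"
  proof (rule Bochner_Integration.integrable_bound)
    show "integrable lebesgue (\<lambda>t. 2 powr p * (norm (f t) powr p + norm (h t) powr p))"
      using assms unfolding Lq_def by auto
    show "(\<lambda>t. norm (f t + h t) powr p) \<in> borel_measurable lebesgue"
      using m by measurable
    have "norm (f t + h t) powr p \<le> 2 powr p * (norm (f t) powr p + norm (h t) powr p)" for t
      using assms(3) norm_triangle_ineq[of "f t" "h t"]
      by (intro order.trans[OF powr_mono2 powr_add_le]) auto
    then show "AE t in lebesgue. norm (norm (f t + h t) powr p)
        \<le> norm (2 powr p * (norm (f t) powr p + norm (h t) powr p))"
      by (intro AE_I2) simp
  qed
qed

lemma Lq_sum:
  assumes "finite J" "\<And>j. j \<in> J \<Longrightarrow> Lq p (F j)" "0 < p"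
  shows "Lq p (\<lambda>t. \<Sum>j\<in>J. F j t)"
  using assms by (induction J rule: finite_induct) (auto intro!: Lq_add)

lemma Lq_uminus:
  assumes "Lq p f"
  shows "Lq p (\<lambda>t. - f t)"
  using assms unfolding Lq_def by auto

lemma Lq_diff:
  assumes "Lq p f" "Lq p h" "0 < p"
  shows "Lq p (\<lambda>t. f t - h t)"
  using Lq_add[OF assms(1) Lq_uminus[OF assms(2)] assms(3)] by simp

lemma Lq_matrix_vector_mult:
  fixes M :: "real^'n^'m"
  assumes "Lq p f" "0 < p"
  shows "Lq p (\<lambda>t. M *v f t)"
  unfolding Lq_def
proof
  show m: "(\<lambda>t. M *v f t) \<in> borel_measurable lebesgue"
    using assms unfolding Lq_def by (auto intro!: borel_measurable_matrix_vector_mult)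
  show "integrable lebesgue (\<lambda>t. norm (M *v f t) powr p)"
  proof (rule Bochner_Integration.integrable_bound)
    show "integrable lebesgue (\<lambda>t. norm M powr p * norm (f t) powr p)"
      using assms unfolding Lq_def by auto
    show "(\<lambda>t. norm (M *v f t) powr p) \<in> borel_measurable lebesgue"
      using m by measurable
    have "norm (M *v f t) powr p \<le> (norm M * norm (f t)) powr p" for t
      using assms(2) norm_matrix_vector_mult_le[of M "f t"] by (intro powr_mono2) auto
    then show "AE t in lebesgue. norm (norm (M *v f t) powr p) \<le> norm (norm M powr p * norm (f t) powr p)"
      by (intro AE_I2) (simp add: powr_mult)
  qed
qed

lemma Lq_shift:
  assumes "Lq p f"
  shows "Lq p (\<lambda>t. f (t + c))"
proof -
  have "(\<lambda>t. f (c + 1 *\<^sub>R t)) \<in> borel_measurable lebesgue"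
    using assms unfolding Lq_def by (intro borel_measurable_affine) auto
  moreover have "integrable lebesgue (\<lambda>t. norm (f (c + 1 * t)) powr p)"
    using assms lebesgue_integrable_real_affine[of "\<lambda>t. norm (f t) powr p" 1 c] unfolding Lq_def
    by simp
  ultimately show ?thesis
    unfolding Lq_def by (simp add: add.commute)
qed

lemma Lq_restrict:
  assumes "Lq p f" "S \<in> sets lebesgue"
  shows "Lq p (\<lambda>t. if t \<in> S then f t else 0)"
  unfolding Lq_def
proof
  show m: "(\<lambda>t. if t \<in> S then f t else 0) \<in> borel_measurable lebesgue"
    using assms unfolding Lq_def by (auto intro!: measurable_If_set)
  show "integrable lebesgue (\<lambda>t. norm (if t \<in> S then f t else 0) powr p)"
  proof (rule Bochner_Integration.integrable_bound)
    show "integrable lebesgue (\<lambda>t. norm (f t) powr p)"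
      using assms unfolding Lq_def by auto
    show "(\<lambda>t. norm (if t \<in> S then f t else 0) powr p) \<in> borel_measurable lebesgue"
      using m by measurable
  qed auto
qed

lemma Lq_bounded_compact_support:
  fixes f :: "real \<Rightarrow> 'a::euclidean_space"
  assumes "f \<in> borel_measurable lebesgue" "\<And>t. norm (f t) \<le> B" "\<And>t. t \<notin> {a..b} \<Longrightarrow> f t = 0" "0 < p"
  shows "Lq p f"
  unfolding Lq_def
proof
  show "integrable lebesgue (\<lambda>t. norm (f t) powr p)"
  proof (rule Bochner_Integration.integrable_bound)
    show "integrable lebesgue (\<lambda>t. B powr p * indicator {a..b} t)"
      by (intro integrable_mult_right integrable_real_indicator) (simp_all add: emeasure_lborel_Icc_eq)
    show "(\<lambda>t. norm (f t) powr p) \<in> borel_measurable lebesgue"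
      using assms(1) by measurable
    have "norm (f t) powr p \<le> B powr p * indicator {a..b} t" for t
      using assms(2)[of t] assms(3)[of t] assms(4) by (cases "t \<in> {a..b}") (auto intro!: powr_mono2)
    then show "AE t in lebesgue. norm (norm (f t) powr p) \<le> norm (B powr p * indicat_real {a..b} t)"
      by (intro AE_I2) simp
  qed
qed fact

lemma integrable_Lq_compact_support:
  fixes f :: "real \<Rightarrow> 'a::euclidean_space"
  assumes "Lq p f" "1 \<le> p" "\<And>t. t \<notin> {a..b} \<Longrightarrow> f t = 0"
  shows "integrable lebesgue f"
proof (rule Bochner_Integration.integrable_bound)
  show "integrable lebesgue (\<lambda>t. indicator {a..b} t + norm (f t) powr p)"
    using assms(1) unfolding Lq_def
    by (intro Bochner_Integration.integrable_add integrable_real_indicator) (auto simp: emeasure_lborel_Icc_eq)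
  show "f \<in> borel_measurable lebesgue"
    using assms(1) unfolding Lq_def by auto
  have "norm (f t) \<le> indicator {a..b} t + norm (f t) powr p" for t
  proof (cases "norm (f t) \<le> 1")
    case True
    then show ?thesis
      using assms(3)[of t] by (cases "t \<in> {a..b}") (auto intro!: add_increasing2)
  next
    case False
    then have "norm (f t) powr 1 \<le> norm (f t) powr p"
      using assms(2) by (intro powr_mono) auto
    then show ?thesis
      using False by (simp add: indicator_def)
  qed
  then show "AE t in lebesgue. norm (f t) \<le> norm (indicator {a..b} t + norm (f t) powr p)"
    by (intro AE_I2) (metis abs_ge_self order_trans real_norm_def)
qed

lemma Lq_on_add:
  assumes "Lq_on p a b f" "Lq_on p a b h" "0 < p"
  shows "Lq_on p a b (\<lambda>t. f t + h t)"
proof -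
  have "Lq p (\<lambda>t. (if t \<in> {a..b} then f t else 0) + (if t \<in> {a..b} then h t else 0))"
    using assms unfolding Lq_on_iff_Lq_zero_extension by (rule Lq_add)
  then show ?thesis
    unfolding Lq_on_iff_Lq_zero_extension by (rule back_subst[of "Lq p"]) auto
qed

lemma Lq_on_diff:
  assumes "Lq_on p a b f" "Lq_on p a b h" "0 < p"
  shows "Lq_on p a b (\<lambda>t. f t - h t)"
proof -
  have "Lq p (\<lambda>t. (if t \<in> {a..b} then f t else 0) - (if t \<in> {a..b} then h t else 0))"
    using assms unfolding Lq_on_iff_Lq_zero_extension by (rule Lq_diff)
  then show ?thesis
    unfolding Lq_on_iff_Lq_zero_extension by (rule back_subst[of "Lq p"]) auto
qed

lemma Lq_on_shift:
  assumes "Lq_on p a b f" "a \<le> c + s" "d + s \<le> b"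
  shows "Lq_on p c d (\<lambda>\<theta>. f (s + \<theta>))"
proof -
  have "Lq p (\<lambda>t. if t \<in> {c..d} then (if t + s \<in> {a..b} then f (t + s) else 0) else 0)"
    using assms(1) Lq_shift[of p "\<lambda>t. if t \<in> {a..b} then f t else 0" s]
    unfolding Lq_on_iff_Lq_zero_extension by (intro Lq_restrict) auto
  then show ?thesis
    unfolding Lq_on_iff_Lq_zero_extension
    by (rule back_subst[of "Lq p"]) (use assms in \<open>auto simp: add.commute\<close>)
qed

section \<open>Distributed delays with bounded kernel\<close>

lemma integrable_reflect_restrict:
  fixes h :: "real \<Rightarrow> 'a::euclidean_space"
  assumes "integrable lebesgue h"
  shows "integrable (lebesgue_on {a..b}) (\<lambda>s. h (t - s))"
proof -
  have "integrable lebesgue (\<lambda>s. h (t + (-1) * s))"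
    using assms by (rule lebesgue_integrable_real_affine) simp
  then have "integrable lebesgue (\<lambda>s. indicator {a..b} s *\<^sub>R h (t - s))"
    by (intro integrable_mult_indicator) auto
  then show ?thesis
    by (subst integrable_restrict_space) auto
qed

lemma integral_exp_neg_le:
  fixes \<gamma> L :: real
  assumes "0 < \<gamma>"
  shows "integrable (lebesgue_on {0..L}) (\<lambda>s. exp (- \<gamma> * s))"
    and "(\<integral>s. exp (- \<gamma> * s) \<partial>lebesgue_on {0..L}) \<le> 1 / \<gamma>"
proof -
  interpret finite_measure "lebesgue_on {0..L}"
    by (intro finite_measure_lebesgue_on) auto
  show "integrable (lebesgue_on {0..L}) (\<lambda>s. exp (- \<gamma> * s))"
  proof (rule integrable_const_bound[where B = 1])
    show "AE s in lebesgue_on {0..L}. norm (exp (- \<gamma> * s)) \<le> 1"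
      using assms by (intro AE_I2) auto
    show "(\<lambda>s. exp (- \<gamma> * s)) \<in> borel_measurable (lebesgue_on {0..L})"
      by (intro measurable_restrict_space1 measurable_completion) (simp only: measurable_lborel2, measurable)
  qed
  show "(\<integral>s. exp (- \<gamma> * s) \<partial>lebesgue_on {0..L}) \<le> 1 / \<gamma>"
  proof (cases "0 \<le> L")
    case True
    have "(\<integral>s. exp (- \<gamma> * s) \<partial>lebesgue_on {0..L}) = (\<integral>s. indicator {0..L} s *\<^sub>R exp (- \<gamma> * s) \<partial>lebesgue)"
      by (rule integral_restrict_space) simp
    also have "\<dots> = (LBINT s. exp (- \<gamma> * s) * indicator {0..L} s)"
      by (subst integral_completion) (simp_all add: mult.commute)
    also have "\<dots> = (- exp (- \<gamma> * L) / \<gamma>) - (- exp (- \<gamma> * 0) / \<gamma>)"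
    proof (rule integral_FTC_Icc_real)
      fix x :: real
      show "((\<lambda>s. - exp (- \<gamma> * s) / \<gamma>) has_real_derivative exp (- \<gamma> * x)) (at x)"
        using assms by (auto intro!: derivative_eq_intros simp: field_simps)
    qed (use True in \<open>auto intro: continuous_intros\<close>)
    also have "\<dots> \<le> 1 / \<gamma>"
      using assms by (simp add: field_simps)
    finally show ?thesis .
  next
    case False
    then show ?thesis
      using assms by simp
  qed
qed

definition delay_integral :: "(real \<Rightarrow> real^'n^'m) \<Rightarrow> real \<Rightarrow> (real \<Rightarrow> real^'n) \<Rightarrow> real \<Rightarrow> real^'m" where
  "delay_integral g L h t = (\<integral>s. g s *v h (t - s) \<partial>lebesgue_on {0..L})"

locale bounded_kernel =
  fixes g :: "real \<Rightarrow> real^'n^'m" and L C :: real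
  assumes kernel_measurable: "g \<in> borel_measurable (lebesgue_on {0..L})"
    and kernel_bound: "AE s in lebesgue_on {0..L}. norm (g s) \<le> C"
    and kernel_bound_nonneg: "0 \<le> C"
begin

lemma measurable_delay_integrand:
  assumes "h \<in> borel_measurable lebesgue"
  shows "(\<lambda>s. g s *v h (t - s)) \<in> borel_measurable (lebesgue_on {0..L})"
proof -
  have "(\<lambda>s. h (t + (-1) *\<^sub>R s)) \<in> borel_measurable lebesgue"
    using assms by (rule borel_measurable_affine) simp
  then have "(\<lambda>s. h (t - s)) \<in> borel_measurable (lebesgue_on {0..L})"
    by (intro measurable_restrict_space1) simp
  then show ?thesis
    using kernel_measurable by (intro borel_measurable_matrix_vector_mult)
qed

lemma norm_delay_integrand_le:
  "AE s in lebesgue_on {0..L}. norm (g s *v h (t - s)) \<le> C * norm (h (t - s))"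
  using kernel_bound
proof eventually_elim
  case (elim s)
  then show ?case
    using norm_matrix_vector_mult_le[of "g s" "h (t - s)"]
    by (meson mult_right_mono norm_ge_zero order_trans)
qed

lemma integrable_delay_integrand:
  assumes "h \<in> borel_measurable lebesgue" "integrable lebesgue h"
  shows "integrable (lebesgue_on {0..L}) (\<lambda>s. g s *v h (t - s))"
proof (rule Bochner_Integration.integrable_bound)
  show "integrable (lebesgue_on {0..L}) (\<lambda>s. C * norm (h (t - s)))"
    using assms(2) by (intro integrable_mult_right integrable_norm integrable_reflect_restrict)
  show "(\<lambda>s. g s *v h (t - s)) \<in> borel_measurable (lebesgue_on {0..L})"
    using assms(1) by (rule measurable_delay_integrand)
  show "AE s in lebesgue_on {0..L}. norm (g s *v h (t - s)) \<le> norm (C * norm (h (t - s)))"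
    using norm_delay_integrand_le by eventually_elim (use kernel_bound_nonneg in auto)
qed

lemma norm_delay_integral_le_L1:
  assumes "h \<in> borel_measurable lebesgue" "integrable lebesgue h"
  shows "norm (delay_integral g L h t) \<le> C * (\<integral>x. norm (h x) \<partial>lebesgue)"
proof -
  have reflected: "integrable lebesgue (\<lambda>s. norm (h (t + (-1) * s)))"
    using assms(2) by (intro integrable_norm lebesgue_integrable_real_affine) simp_all
  have "norm (delay_integral g L h t) \<le> (\<integral>s. norm (g s *v h (t - s)) \<partial>lebesgue_on {0..L})"
    unfolding delay_integral_def by (rule integral_norm_bound)
  also have "\<dots> \<le> (\<integral>s. C * norm (h (t - s)) \<partial>lebesgue_on {0..L})"
    using assms norm_delay_integrand_le
    by (intro integral_mono_AE integrable_norm integrable_delay_integrand integrable_mult_right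
        integrable_reflect_restrict) simp_all
  also have "\<dots> = C * (\<integral>s. norm (h (t - s)) \<partial>lebesgue_on {0..L})"
    by simp
  also have "\<dots> \<le> C * (\<integral>s. norm (h (t - s)) \<partial>lebesgue_on UNIV)"
    using reflected kernel_bound_nonneg
    by (intro mult_left_mono integral_mono_lebesgue_on_AE) (auto simp: lebesgue_on_UNIV_eq)
  also have "(\<integral>s. norm (h (t - s)) \<partial>lebesgue_on UNIV) = (\<integral>x. norm (h x) \<partial>lebesgue)"
    using lebesgue_integral_real_affine[of "-1" "\<lambda>x. norm (h x)" t]
    by (simp add: lebesgue_on_UNIV_eq)
  finally show ?thesis .
qed

lemma norm_delay_integral_le_exp:
  assumes "h \<in> borel_measurable lebesgue" "\<And>\<tau>. norm (h \<tau>) \<le> c * exp (\<gamma> * \<tau>)" "0 < \<gamma>"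
  shows "norm (delay_integral g L h t) \<le> C * c * exp (\<gamma> * t) / \<gamma>"
proof -
  interpret finite_measure "lebesgue_on {0..L}"
    by (intro finite_measure_lebesgue_on) auto
  have "0 \<le> c"
    using order_trans[OF norm_ge_zero assms(2)[of 0]] by simp
  have bound: "AE s in lebesgue_on {0..L}. norm (g s *v h (t - s)) \<le> C * c * exp (\<gamma> * t) * exp (- \<gamma> * s)"
    using norm_delay_integrand_le[of h t]
  proof eventually_elim
    case (elim s)
    have "C * norm (h (t - s)) \<le> C * (c * exp (\<gamma> * (t - s)))"
      using assms(2) kernel_bound_nonneg by (intro mult_left_mono) auto
    also have "\<dots> = C * c * exp (\<gamma> * t) * exp (- \<gamma> * s)"
      by (simp add: right_diff_distrib exp_diff exp_minus field_simps)
    finally show ?case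
      using elim by linarith
  qed
  have "integrable (lebesgue_on {0..L}) (\<lambda>s. g s *v h (t - s))"
  proof (rule integrable_const_bound[where B = "C * c * exp (\<gamma> * t)"])
    show "AE s in lebesgue_on {0..L}. norm (g s *v h (t - s)) \<le> C * c * exp (\<gamma> * t)"
      using bound
    proof (rule AE_mp, intro AE_I2 impI)
      fix s
      assume "s \<in> space (lebesgue_on {0..L})"
        and "norm (g s *v h (t - s)) \<le> C * c * exp (\<gamma> * t) * exp (- \<gamma> * s)"
      moreover have "C * c * exp (\<gamma> * t) * exp (- \<gamma> * s) \<le> C * c * exp (\<gamma> * t)"
        if "s \<in> {0..L}"
        using that assms(3) kernel_bound_nonneg \<open>0 \<le> c\<close> by (intro mult_left_le) auto
      ultimately show "norm (g s *v h (t - s)) \<le> C * c * exp (\<gamma> * t)"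
        by auto
    qed
  qed (rule measurable_delay_integrand[OF assms(1)])
  then have "norm (delay_integral g L h t) \<le> (\<integral>s. C * c * exp (\<gamma> * t) * exp (- \<gamma> * s) \<partial>lebesgue_on {0..L})"
    unfolding delay_integral_def using bound integral_exp_neg_le(1)[OF assms(3)]
    by (intro order.trans[OF integral_norm_bound] integral_mono_AE) auto
  also have "\<dots> = C * c * exp (\<gamma> * t) * (\<integral>s. exp (- \<gamma> * s) \<partial>lebesgue_on {0..L})"
    by simp
  also have "\<dots> \<le> C * c * exp (\<gamma> * t) * (1 / \<gamma>)"
    using integral_exp_neg_le(2)[OF assms(3)] kernel_bound_nonneg \<open>0 \<le> c\<close>
    by (intro mult_left_mono) auto
  finally show ?thesis
    by simp
qed

lemma borel_measurable_delay_integral: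
  assumes "h \<in> borel_measurable borel"
  shows "delay_integral g L h \<in> borel_measurable borel"
proof -
  interpret finite_measure "lebesgue_on {0..L}"
    by (intro finite_measure_lebesgue_on) auto
  have "snd \<in> borel \<Otimes>\<^sub>M lebesgue_on {0..L} \<rightarrow>\<^sub>M (borel :: real measure)"
    by (intro measurable_snd'' measurable_restrict_space1 measurable_completion) simp
  moreover have "fst \<in> borel \<Otimes>\<^sub>M lebesgue_on {0..L} \<rightarrow>\<^sub>M (borel :: real measure)"
    by (rule measurable_fst'') simp
  ultimately have "(\<lambda>x. h (fst x - snd x)) \<in> borel_measurable (borel \<Otimes>\<^sub>M lebesgue_on {0..L})"
    by (intro measurable_compose[OF _ assms] borel_measurable_diff)
  moreover have "(\<lambda>x. g (snd x)) \<in> borel_measurable (borel \<Otimes>\<^sub>M lebesgue_on {0..L})"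
    using measurable_compose[OF measurable_snd kernel_measurable] .
  ultimately have "(\<lambda>(t, s). g s *v h (t - s)) \<in> borel_measurable (borel \<Otimes>\<^sub>M lebesgue_on {0..L})"
    unfolding case_prod_beta' by (intro borel_measurable_matrix_vector_mult)
  then show ?thesis
    unfolding delay_integral_def[abs_def] by (rule borel_measurable_lebesgue_integral)
qed

lemma delay_integral_add:
  assumes "h \<in> borel_measurable lebesgue" "integrable lebesgue h"
    and "k \<in> borel_measurable lebesgue" "integrable lebesgue k"
  shows "delay_integral g L (\<lambda>\<tau>. h \<tau> + k \<tau>) t = delay_integral g L h t + delay_integral g L k t"
  unfolding delay_integral_def matrix_vector_right_distrib
  using assms by (intro Bochner_Integration.integral_add integrable_delay_integrand)

lemma delay_integral_diff:
  assumes "h \<in> borel_measurable lebesgue" "integrable lebesgue h"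
    and "k \<in> borel_measurable lebesgue" "integrable lebesgue k"
  shows "delay_integral g L (\<lambda>\<tau>. h \<tau> - k \<tau>) t = delay_integral g L h t - delay_integral g L k t"
  unfolding delay_integral_def matrix_vector_mult_diff_distrib
  using assms by (intro Bochner_Integration.integral_diff integrable_delay_integrand)

lemma delay_integral_cong_AE:
  assumes "AE \<tau> in lebesgue. h \<tau> = k \<tau>" "h \<in> borel_measurable lebesgue" "k \<in> borel_measurable lebesgue"
  shows "delay_integral g L h t = delay_integral g L k t"
  unfolding delay_integral_def
proof (rule integral_cong_AE)
  have "AE s in lebesgue. h (t + (-1) * s) = k (t + (-1) * s)"
    using assms(1) by (rule AE_lebesgue_affine) simp
  then show "AE s in lebesgue_on {0..L}. g s *v h (t - s) = g s *v k (t - s)"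
    by (intro AE_lebesgue_on_if_AE_lebesgue) (auto elim: AE_mp)
qed (use assms(2,3) measurable_delay_integrand in auto)

lemma integrable_delay_integrand_Lq_on:
  assumes "Lq_on q (- L) T x" "1 \<le> q" "t \<in> {0..T}"
  shows "integrable (lebesgue_on {0..L}) (\<lambda>s. g s *v x (t - s))"
proof -
  define X where "X \<tau> = (if \<tau> \<in> {- L..T} then x \<tau> else 0)" for \<tau>
  have "Lq q X"
    using assms(1) unfolding Lq_on_iff_Lq_zero_extension X_def .
  moreover have "integrable lebesgue X"
    using \<open>Lq q X\<close> assms(2) by (rule integrable_Lq_compact_support[where a = "- L" and b = T]) (auto simp: X_def)
  ultimately have "integrable (lebesgue_on {0..L}) (\<lambda>s. g s *v X (t - s))"
    by (intro integrable_delay_integrand) (simp_all add: Lq_def)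
  moreover have "g s *v x (t - s) = g s *v X (t - s)" if "s \<in> space (lebesgue_on {0..L})" for s
    using that assms(3) by (simp add: X_def)
  then have "integrable (lebesgue_on {0..L}) (\<lambda>s. g s *v x (t - s))
      \<longleftrightarrow> integrable (lebesgue_on {0..L}) (\<lambda>s. g s *v X (t - s))"
    by (rule Bochner_Integration.integrable_cong[OF refl])
  ultimately show ?thesis
    by simp
qed

end

lemma bounded_kernel_if_Linf_on:
  assumes "Linf_on 0 L g"
  obtains C where "bounded_kernel g L C"
proof -
  obtain C where "g \<in> borel_measurable (lebesgue_on {0..L})" "AE s in lebesgue_on {0..L}. norm (g s) \<le> C"
    using assms unfolding Linf_on_def by blast
  then have "bounded_kernel g L (max C 0)"
    by unfold_locales (auto elim: AE_mp)
  then show ?thesis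
    using that by blast
qed

section \<open>Two fixed point principles\<close>

lemma weighted_contraction_fixed_point:
  fixes E :: "('a \<Rightarrow> 'b::banach) \<Rightarrow> 'a \<Rightarrow> 'b" and w :: "'a \<Rightarrow> real"
  assumes maps: "\<And>h. h \<in> G \<Longrightarrow> E h \<in> G" and start: "h\<^sub>0 \<in> G"
    and contraction: "\<And>h h' c t. h \<in> G \<Longrightarrow> h' \<in> G \<Longrightarrow> (\<And>\<tau>. norm (h \<tau> - h' \<tau>) \<le> c * w \<tau>)
        \<Longrightarrow> norm (E h t - E h' t) \<le> c / 2 * w t"
    and first_step: "\<And>t. norm (E h\<^sub>0 t - h\<^sub>0 t) \<le> c\<^sub>0 * w t"
    and closed: "\<And>r. (\<And>t. (\<lambda>n. (E ^^ n) h\<^sub>0 t) \<longlonglongrightarrow> r t)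
        \<Longrightarrow> (\<And>t. norm (r t - h\<^sub>0 t) \<le> 2 * c\<^sub>0 * w t) \<Longrightarrow> r \<in> G"
  obtains r where "r \<in> G" "E r = r"
proof -
  define f where "f n = (E ^^ n) h\<^sub>0" for n
  have f_in: "f n \<in> G" for n
    by (induction n) (auto simp: f_def start maps)
  have step: "norm (f (Suc n) t - f n t) \<le> c\<^sub>0 * (1/2) ^ n * w t" for n t
  proof (induction n arbitrary: t)
    case 0
    show ?case
      using first_step by (simp add: f_def)
  next
    case (Suc n)
    have "norm (E (f (Suc n)) t - E (f n) t) \<le> c\<^sub>0 * (1/2) ^ n / 2 * w t"
      using Suc.IH by (intro contraction f_in)
    then show ?case
      by (simp add: f_def)
  qed
  have tail: "norm (f (n + k) t - f n t) \<le> 2 * c\<^sub>0 * ((1/2) ^ n - (1/2) ^ (n + k)) * w t" for n k t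
  proof (induction k)
    case (Suc k)
    have "norm (f (n + Suc k) t - f n t) \<le> norm (f (n + k) t - f n t) + norm (f (Suc (n + k)) t - f (n + k) t)"
      using norm_triangle_ineq[of "f (n + k) t - f n t" "f (Suc (n + k)) t - f (n + k) t"] by simp
    also have "\<dots> \<le> 2 * c\<^sub>0 * ((1/2) ^ n - (1/2) ^ (n + k)) * w t + c\<^sub>0 * (1/2) ^ (n + k) * w t"
      using Suc.IH step by (rule add_mono)
    finally show ?case
      by (simp add: field_simps)
  qed simp
  have "0 \<le> c\<^sub>0 * w t" for t
    using order_trans[OF norm_ge_zero step[of 0 t]] by simp
  have tail_bound: "norm (f m t - f n t) \<le> 2 * c\<^sub>0 * (1/2) ^ n * w t" if "n \<le> m" for n m t
  proof -
    have "norm (f m t - f n t) \<le> 2 * c\<^sub>0 * ((1/2) ^ n - (1/2) ^ m) * w t"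
      using tail[of n "m - n" t] that by simp
    also have "\<dots> \<le> 2 * c\<^sub>0 * (1/2) ^ n * w t"
      using mult_nonneg_nonneg[OF \<open>0 \<le> c\<^sub>0 * w t\<close> zero_le_power[of "1/2 :: real" m]]
      by (simp add: algebra_simps)
    finally show ?thesis .
  qed
  define r where "r t = h\<^sub>0 t + (\<Sum>k. f (Suc k) t - f k t)" for t
  have lim: "(\<lambda>n. f n t) \<longlonglongrightarrow> r t" for t
  proof -
    have "summable (\<lambda>k. c\<^sub>0 * w t * (1/2) ^ k)"
      by (intro summable_mult summable_geometric) simp
    then have "summable (\<lambda>k. f (Suc k) t - f k t)"
      by (rule summable_comparison_test') (use step in \<open>simp add: mult_ac\<close>)
    then have "(\<lambda>n. h\<^sub>0 t + (\<Sum>k<n. f (Suc k) t - f k t)) \<longlonglongrightarrow> r t"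
      unfolding r_def by (intro tendsto_add tendsto_const summable_LIMSEQ)
    moreover have "h\<^sub>0 t + (\<Sum>k<n. f (Suc k) t - f k t) = f n t" for n
      using sum_lessThan_telescope[of "\<lambda>k. f k t" n] by (simp add: f_def)
    ultimately show ?thesis
      by simp
  qed
  have r_tail: "norm (r t - f n t) \<le> 2 * c\<^sub>0 * (1/2) ^ n * w t" for n t
    using tail_bound
    by (intro LIMSEQ_le_const2[OF tendsto_norm[OF tendsto_diff[OF lim tendsto_const]]]) auto
  have "r \<in> G"
    using closed lim r_tail[where n = 0] by (simp add: f_def)
  moreover have "E r = r"
  proof
    fix t
    have "\<forall>n. norm (E r t - f (Suc n) t) \<le> c\<^sub>0 * (1/2) ^ n * w t"
      using contraction[OF \<open>r \<in> G\<close> f_in r_tail] by (simp add: f_def)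
    moreover have "(\<lambda>n. c\<^sub>0 * (1/2) ^ n * w t) \<longlonglongrightarrow> 0"
      by (rule tendsto_mult_left_zero, rule tendsto_mult_right_zero, rule LIMSEQ_power_zero) simp
    ultimately have "(\<lambda>n. E r t - f (Suc n) t) \<longlonglongrightarrow> 0"
      by (rule Lim_null_comparison[OF always_eventually])
    from tendsto_diff[OF tendsto_const[of "E r t"] this]
    have "(\<lambda>n. f (Suc n) t) \<longlonglongrightarrow> E r t"
      by simp
    then show "E r t = r t"
      using LIMSEQ_Suc[OF lim] by (rule LIMSEQ_unique)
  qed
  ultimately show ?thesis
    using that by blast
qed

lemma exists_contraction_exponent:
  fixes a C \<delta> :: real
  assumes "0 < \<delta>"
  obtains \<gamma> where "0 < \<gamma>" "a * exp (- \<gamma> * \<delta>) + C / \<gamma> \<le> 1/2"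
proof -
  have "((\<lambda>\<gamma>. a * exp (- \<gamma> * \<delta>) + C / \<gamma>) \<longlongrightarrow> 0) at_top"
    using assms by real_asymp
  then have "eventually (\<lambda>\<gamma>. a * exp (- \<gamma> * \<delta>) + C / \<gamma> < 1/2) at_top"
    by (rule order_tendstoD) simp
  moreover have "eventually (\<lambda>\<gamma>. 0 < \<gamma>) (at_top :: real filter)"
    by (rule eventually_gt_at_top)
  ultimately have "eventually (\<lambda>\<gamma>. 0 < \<gamma> \<and> a * exp (- \<gamma> * \<delta>) + C / \<gamma> < 1/2) at_top"
    by eventually_elim simp
  then obtain \<gamma>\<^sub>0 where "\<And>\<gamma>. \<gamma>\<^sub>0 \<le> \<gamma> \<Longrightarrow> 0 < \<gamma> \<and> a * exp (- \<gamma> * \<delta>) + C / \<gamma> < 1/2"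
    by (auto simp: eventually_at_top_linorder)
  then show ?thesis
    using that[of \<gamma>\<^sub>0] by fastforce
qed

lemma causal_operator_fixed_point:
  fixes D :: "(real \<Rightarrow> 'a) \<Rightarrow> real \<Rightarrow> 'a"
  assumes "0 < \<delta>"
    and causal: "\<And>h h' t. (\<And>\<tau>. \<tau> \<le> t - \<delta> \<Longrightarrow> h \<tau> = h' \<tau>) \<Longrightarrow> D h t = D h' t"
    and outside: "\<And>h h' t. t \<notin> {a<..b} \<Longrightarrow> D h t = D h' t"
  obtains n where "D ((D ^^ n) h) = (D ^^ n) h"
proof -
  have agree: "(D ^^ Suc n) h t = (D ^^ Suc n) h' t" if "t < a + real n * \<delta>" for n h h' t
    using that
  proof (induction n arbitrary: t)
    case 0
    then show ?case
      using outside by simp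
  next
    case (Suc n)
    show ?case
    proof (cases "t \<in> {a<..b}")
      case True
      have "(D ^^ Suc n) h \<tau> = (D ^^ Suc n) h' \<tau>" if "\<tau> \<le> t - \<delta>" for \<tau>
        using Suc.prems that by (intro Suc.IH) (simp add: algebra_simps)
      then show ?thesis
        by (simp only: funpow.simps(2) o_apply) (rule causal)
    next
      case False
      then show ?thesis
        using outside by simp
    qed
  qed
  obtain n where n: "b - a < real n * \<delta>"
    using reals_Archimedean3[OF assms(1)] by blast
  have "D ((D ^^ Suc n) h) t = (D ^^ Suc n) h t" for t
  proof (cases "t < a + real n * \<delta>")
    case True
    then have "(D ^^ Suc n) (D h) t = (D ^^ Suc n) h t"
      by (rule agree)
    then show ?thesis
      by (subst funpow_swap1) assumption
  next
    case False
    then have "t \<notin> {a<..b}"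
      using n by auto
    then show ?thesis
      using outside[of t "(D ^^ Suc n) h" "(D ^^ n) h"] by simp
  qed
  then show ?thesis
    using that by blast
qed

section \<open>The free motion\<close>

locale delay_system = bounded_kernel g "\<Lambda> N" C
  for N :: nat and \<Lambda> :: "nat \<Rightarrow> real" and A :: "nat \<Rightarrow> real^'d^'d" and g :: "real \<Rightarrow> real^'d^'d"
    and C :: real +
  fixes T :: real
  assumes first_delay_pos: "0 < \<Lambda> 1"
    and first_delay_min: "\<And>j. j \<in> {1..N} \<Longrightarrow> \<Lambda> 1 \<le> \<Lambda> j"
begin

definition delayed_sum :: "(real \<Rightarrow> real^'d) \<Rightarrow> real \<Rightarrow> real^'d" where
  "delayed_sum h t = (\<Sum>j=1..N. A j *v h (t - \<Lambda> j))"

lemma borel_measurable_delayed_sum: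
  assumes [measurable]: "h \<in> borel_measurable borel"
  shows "delayed_sum h \<in> borel_measurable borel"
  unfolding delayed_sum_def[abs_def] by measurable

lemma delayed_sum_add: "delayed_sum (\<lambda>\<tau>. h \<tau> + k \<tau>) t = delayed_sum h t + delayed_sum k t"
  by (simp add: delayed_sum_def matrix_vector_right_distrib sum.distrib)

lemma delayed_sum_diff: "delayed_sum (\<lambda>\<tau>. h \<tau> - k \<tau>) t = delayed_sum h t - delayed_sum k t"
  by (simp add: delayed_sum_def matrix_vector_mult_diff_distrib sum_subtractf)

lemma norm_delayed_sum_le:
  assumes "\<And>\<tau>. norm (h \<tau>) \<le> M"
  shows "norm (delayed_sum h t) \<le> (\<Sum>j=1..N. norm (A j)) * M"
proof -
  have "norm (delayed_sum h t) \<le> (\<Sum>j=1..N. norm (A j) * norm (h (t - \<Lambda> j)))"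
    unfolding delayed_sum_def by (intro order.trans[OF norm_sum] sum_mono norm_matrix_vector_mult_le)
  also have "\<dots> \<le> (\<Sum>j=1..N. norm (A j) * M)"
    using assms by (intro sum_mono mult_left_mono) auto
  finally show ?thesis
    by (simp add: sum_distrib_right)
qed

lemma norm_delayed_sum_le_exp:
  assumes "\<And>\<tau>. norm (h \<tau>) \<le> c * exp (\<gamma> * \<tau>)" "0 \<le> \<gamma>"
  shows "norm (delayed_sum h t) \<le> (\<Sum>j=1..N. norm (A j)) * exp (- \<gamma> * \<Lambda> 1) * c * exp (\<gamma> * t)"
proof -
  have "0 \<le> c"
    using order_trans[OF norm_ge_zero assms(1)[of 0]] by simp
  have "norm (delayed_sum h t) \<le> (\<Sum>j=1..N. norm (A j) * norm (h (t - \<Lambda> j)))"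
    unfolding delayed_sum_def by (intro order.trans[OF norm_sum] sum_mono norm_matrix_vector_mult_le)
  also have "\<dots> \<le> (\<Sum>j=1..N. norm (A j) * (c * exp (\<gamma> * t) * exp (- \<gamma> * \<Lambda> 1)))"
  proof (intro sum_mono mult_left_mono)
    fix j
    assume "j \<in> {1..N}"
    have "norm (h (t - \<Lambda> j)) \<le> c * exp (\<gamma> * (t - \<Lambda> j))"
      by (rule assms(1))
    also have "\<dots> \<le> c * exp (\<gamma> * t + - \<gamma> * \<Lambda> 1)"
      using first_delay_min[OF \<open>j \<in> {1..N}\<close>] assms(2) \<open>0 \<le> c\<close>
      by (intro mult_left_mono) (auto simp: algebra_simps mult_left_mono)
    also have "\<dots> = c * exp (\<gamma> * t) * exp (- \<gamma> * \<Lambda> 1)"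
      by (simp add: exp_add[symmetric])
    finally show "norm (h (t - \<Lambda> j)) \<le> c * exp (\<gamma> * t) * exp (- \<gamma> * \<Lambda> 1)" .
  qed simp
  also have "\<dots> = (\<Sum>j=1..N. norm (A j)) * (c * exp (\<gamma> * t) * exp (- \<gamma> * \<Lambda> 1))"
    by (rule sum_distrib_right[symmetric])
  finally show ?thesis
    by (simp add: mult_ac)
qed

definition bounded_on_horizon :: "(real \<Rightarrow> real^'d) set" where
  "bounded_on_horizon =
     {h. h \<in> borel_measurable borel \<and> (\<exists>M. \<forall>t. norm (h t) \<le> M) \<and> (\<forall>t. t \<notin> {0<..T} \<longrightarrow> h t = 0)}"

lemma Lq_if_bounded_on_horizon:
  assumes "h \<in> bounded_on_horizon" "0 < p"
  shows "Lq p h"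
proof -
  obtain M where "\<And>t. norm (h t) \<le> M"
    using assms(1) unfolding bounded_on_horizon_def by auto
  then show ?thesis
    using assms unfolding bounded_on_horizon_def
    by (intro Lq_bounded_compact_support[where a = 0 and b = T]) (auto intro: measurable_completion)
qed

lemma integrable_if_bounded_on_horizon:
  assumes "h \<in> bounded_on_horizon"
  shows "h \<in> borel_measurable lebesgue" "integrable lebesgue h"
proof -
  show "integrable lebesgue h"
    using assms Lq_if_bounded_on_horizon[OF assms, of 1]
    by (intro integrable_Lq_compact_support[where a = 0 and b = T and p = 1])
      (auto simp: bounded_on_horizon_def)
  then show "h \<in> borel_measurable lebesgue"
    by (rule borel_measurable_integrable)
qed

definition correction_step :: "(real \<Rightarrow> real^'d) \<Rightarrow> (real \<Rightarrow> real^'d) \<Rightarrow> real \<Rightarrow> real^'d" where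
  "correction_step b h t =
     (if t \<in> {0<..T} then delayed_sum h t + delay_integral g (\<Lambda> N) h t + b t else 0)"

lemma correction_step_bounded_on_horizon:
  assumes "b \<in> borel_measurable borel" "\<And>t. norm (b t) \<le> B" "h \<in> bounded_on_horizon"
  shows "correction_step b h \<in> bounded_on_horizon"
proof -
  obtain M where M: "\<And>t. norm (h t) \<le> M" and h_meas: "h \<in> borel_measurable borel"
    using assms(3) unfolding bounded_on_horizon_def by auto
  define K where "K = (\<Sum>j=1..N. norm (A j)) * M + C * (\<integral>x. norm (h x) \<partial>lebesgue) + B"
  have "norm (delayed_sum h t + delay_integral g (\<Lambda> N) h t + b t) \<le> K" for t
  proof -
    have "norm (delay_integral g (\<Lambda> N) h t) \<le> C * (\<integral>x. norm (h x) \<partial>lebesgue)"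
      using integrable_if_bounded_on_horizon[OF assms(3)] by (rule norm_delay_integral_le_L1)
    moreover have "norm (delayed_sum h t + delay_integral g (\<Lambda> N) h t + b t)
        \<le> norm (delayed_sum h t) + norm (delay_integral g (\<Lambda> N) h t) + norm (b t)"
      by (meson add_mono norm_triangle_ineq order_refl order_trans)
    ultimately show ?thesis
      using norm_delayed_sum_le[where h = h and M = M and t = t, OF M] assms(2)[of t] unfolding K_def by linarith
  qed
  then have "norm (correction_step b h t) \<le> K" for t
    unfolding correction_step_def using order_trans[OF norm_ge_zero] by auto
  moreover have "correction_step b h \<in> borel_measurable borel"
    using borel_measurable_delayed_sum[OF h_meas] borel_measurable_delay_integral[OF h_meas] assms(1)
    unfolding correction_step_def[abs_def] by measurable
  moreover have "correction_step b h t = 0" if "t \<notin> {0<..T}" for t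
    using that unfolding correction_step_def by auto
  ultimately show ?thesis
    unfolding bounded_on_horizon_def by blast
qed

lemma correction_step_contraction:
  assumes "h \<in> bounded_on_horizon" "h' \<in> bounded_on_horizon"
    and "\<And>\<tau>. norm (h \<tau> - h' \<tau>) \<le> c * exp (\<gamma> * \<tau>)" "0 < \<gamma>"
  shows "norm (correction_step b h t - correction_step b h' t)
    \<le> ((\<Sum>j=1..N. norm (A j)) * exp (- \<gamma> * \<Lambda> 1) + C / \<gamma>) * c * exp (\<gamma> * t)"
proof -
  have "0 \<le> c"
    using order_trans[OF norm_ge_zero assms(3)[of 0]] by simp
  have diff_meas: "(\<lambda>\<tau>. h \<tau> - h' \<tau>) \<in> borel_measurable lebesgue"
    using integrable_if_bounded_on_horizon[OF assms(1)] integrable_if_bounded_on_horizon[OF assms(2)]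
    by measurable
  have "correction_step b h t - correction_step b h' t
      = (if t \<in> {0<..T} then delayed_sum (\<lambda>\<tau>. h \<tau> - h' \<tau>) t + delay_integral g (\<Lambda> N) (\<lambda>\<tau>. h \<tau> - h' \<tau>) t else 0)"
    using integrable_if_bounded_on_horizon[OF assms(1)] integrable_if_bounded_on_horizon[OF assms(2)]
    by (simp add: correction_step_def delayed_sum_diff delay_integral_diff)
  also have "norm \<dots> \<le> (\<Sum>j=1..N. norm (A j)) * exp (- \<gamma> * \<Lambda> 1) * c * exp (\<gamma> * t) + C * c * exp (\<gamma> * t) / \<gamma>"
    using norm_delayed_sum_le_exp[OF assms(3), of t] norm_delay_integral_le_exp[OF diff_meas assms(3,4), of t]
      assms(4) \<open>0 \<le> c\<close> kernel_bound_nonneg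
    by (auto intro!: order.trans[OF norm_triangle_ineq] add_mono add_nonneg_nonneg mult_nonneg_nonneg sum_nonneg)
  finally show ?thesis
    by (simp add: field_simps)
qed

lemma bounded_correction_exists:
  assumes "b \<in> borel_measurable borel" "\<And>t. norm (b t) \<le> B"
  obtains r where "r \<in> bounded_on_horizon"
    "\<And>t. t \<in> {0<..T} \<Longrightarrow> r t = delayed_sum r t + delay_integral g (\<Lambda> N) r t + b t"
proof -
  obtain \<gamma> where \<gamma>: "0 < \<gamma>" "(\<Sum>j=1..N. norm (A j)) * exp (- \<gamma> * \<Lambda> 1) + C / \<gamma> \<le> 1/2"
    using exists_contraction_exponent[OF first_delay_pos] by blast
  have "0 \<le> B"
    using order_trans[OF norm_ge_zero assms(2)] by simp
  have zero: "(\<lambda>_. 0) \<in> bounded_on_horizon"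
    by (auto simp: bounded_on_horizon_def)
  have iterates: "(correction_step b ^^ n) (\<lambda>_. 0) \<in> bounded_on_horizon" for n
    by (induction n) (simp_all add: zero correction_step_bounded_on_horizon[OF assms])
  obtain r where r: "r \<in> bounded_on_horizon" "correction_step b r = r"
  proof (rule weighted_contraction_fixed_point[where G = bounded_on_horizon and h\<^sub>0 = "\<lambda>_. 0"
        and w = "\<lambda>t. exp (\<gamma> * t)" and c\<^sub>0 = B])
    show "correction_step b h \<in> bounded_on_horizon" if "h \<in> bounded_on_horizon" for h
      using assms that by (rule correction_step_bounded_on_horizon)
    show "norm (correction_step b h t - correction_step b h' t) \<le> c / 2 * exp (\<gamma> * t)"
      if "h \<in> bounded_on_horizon" "h' \<in> bounded_on_horizon"
        and "\<And>\<tau>. norm (h \<tau> - h' \<tau>) \<le> c * exp (\<gamma> * \<tau>)" for h h' c t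
    proof -
      have "0 \<le> c"
        using order_trans[OF norm_ge_zero that(3)[of 0]] by simp
      have "norm (correction_step b h t - correction_step b h' t)
          \<le> ((\<Sum>j=1..N. norm (A j)) * exp (- \<gamma> * \<Lambda> 1) + C / \<gamma>) * c * exp (\<gamma> * t)"
        by (rule correction_step_contraction[OF that \<gamma>(1)])
      also have "\<dots> \<le> 1/2 * c * exp (\<gamma> * t)"
        using \<gamma>(2) \<open>0 \<le> c\<close> by (intro mult_right_mono) auto
      finally show ?thesis
        by simp
    qed
    show "norm (correction_step b (\<lambda>_. 0) t - 0) \<le> B * exp (\<gamma> * t)" for t
    proof (cases "t \<in> {0<..T}")
      case True
      then have "B \<le> B * exp (\<gamma> * t)"
        using \<gamma>(1) \<open>0 \<le> B\<close> by (simp add: mult_le_cancel_left1)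
      then show ?thesis
        using True assms(2)[of t] by (simp add: correction_step_def delayed_sum_def delay_integral_def)
    next
      case False
      then show ?thesis
        using \<open>0 \<le> B\<close> unfolding correction_step_def by auto
    qed
    show "r \<in> bounded_on_horizon"
      if lim: "\<And>t. (\<lambda>n. (correction_step b ^^ n) (\<lambda>_. 0) t) \<longlonglongrightarrow> r t"
        and bound: "\<And>t. norm (r t - 0) \<le> 2 * B * exp (\<gamma> * t)" for r
    proof -
      have "(correction_step b ^^ n) (\<lambda>_. 0) \<in> borel_measurable borel" for n
        using iterates unfolding bounded_on_horizon_def by blast
      then have "r \<in> borel_measurable borel"
        using lim by (rule borel_measurable_LIMSEQ_metric)
      moreover have "r t = 0" if "t \<notin> {0<..T}" for t
      proof -
        have "(\<lambda>n. (correction_step b ^^ n) (\<lambda>_. 0) t) = (\<lambda>n. 0)"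
          using iterates that unfolding bounded_on_horizon_def by blast
        then show ?thesis
          using lim[of t] by (simp add: LIMSEQ_const_iff)
      qed
      moreover have "norm (r t) \<le> 2 * B * exp (\<gamma> * T)" if "t \<in> {0<..T}" for t
      proof -
        have "exp (\<gamma> * t) \<le> exp (\<gamma> * T)"
          using that \<gamma>(1) by simp
        then have "2 * B * exp (\<gamma> * t) \<le> 2 * B * exp (\<gamma> * T)"
          using \<open>0 \<le> B\<close> by (intro mult_left_mono) auto
        then show ?thesis
          using bound[of t] by simp
      qed
      ultimately have "\<forall>t. norm (r t) \<le> 2 * B * exp (\<gamma> * T)"
        using \<open>0 \<le> B\<close> by (metis norm_zero exp_ge_zero mult_nonneg_nonneg zero_le_numeral)
      with \<open>r \<in> borel_measurable borel\<close> \<open>\<And>t. t \<notin> {0<..T} \<Longrightarrow> r t = 0\<close> show ?thesis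
        unfolding bounded_on_horizon_def by blast
    qed
  qed (use zero in simp)
  then show ?thesis
    using that by (metis correction_step_def)
qed

definition difference_step :: "(real \<Rightarrow> real^'d) \<Rightarrow> (real \<Rightarrow> real^'d) \<Rightarrow> real \<Rightarrow> real^'d" where
  "difference_step \<phi> h t = (if t \<le> 0 then \<phi> t else if t \<le> T then delayed_sum h t else 0)"

lemma borel_measurable_difference_step:
  assumes [measurable]: "\<phi> \<in> borel_measurable borel" "h \<in> borel_measurable borel"
  shows "difference_step \<phi> h \<in> borel_measurable borel"
  using borel_measurable_delayed_sum[OF assms(2)] unfolding difference_step_def[abs_def] by measurable

lemma Lq_difference_step:
  assumes "Lq q \<phi>" "Lq q h" "0 < q"
  shows "Lq q (difference_step \<phi> h)"
proof -
  have split: "difference_step \<phi> h = (\<lambda>t. (if t \<in> {..0} then \<phi> t else 0) +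
      (if t \<in> {0<..T} then (\<Sum>j\<in>{1..N}. A j *v h (t + - \<Lambda> j)) else 0))"
    by (auto simp: difference_step_def delayed_sum_def fun_eq_iff)
  show ?thesis
    unfolding split using assms by (intro Lq_add Lq_restrict Lq_sum Lq_matrix_vector_mult Lq_shift) auto
qed

lemma difference_solution_exists:
  assumes "\<phi> \<in> borel_measurable borel" "Lq q \<phi>" "0 < q"
  obtains p where "p \<in> borel_measurable borel" "Lq q p" "\<And>t. t \<le> 0 \<Longrightarrow> p t = \<phi> t"
    "\<And>t. t \<in> {0<..T} \<Longrightarrow> p t = delayed_sum p t" "\<And>t. max 0 T < t \<Longrightarrow> p t = 0"
proof -
  let ?D = "difference_step \<phi>"
  obtain n where fixed: "?D ((?D ^^ n) (\<lambda>_. 0)) = (?D ^^ n) (\<lambda>_. 0)"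
  proof (rule causal_operator_fixed_point[OF first_delay_pos])
    show "?D h t = ?D h' t" if "\<And>\<tau>. \<tau> \<le> t - \<Lambda> 1 \<Longrightarrow> h \<tau> = h' \<tau>" for h h' t
      using that first_delay_min unfolding difference_step_def delayed_sum_def
      by (auto intro!: sum.cong)
    show "?D h t = ?D h' t" if "t \<notin> {0<..T}" for h h' t
      using that unfolding difference_step_def by auto
  qed
  define p where "p = (?D ^^ n) (\<lambda>_. 0)"
  have "(?D ^^ k) (\<lambda>_. 0) \<in> borel_measurable borel \<and> Lq q ((?D ^^ k) (\<lambda>_. 0))" for k
    by (induction k) (simp_all add: assms borel_measurable_difference_step Lq_difference_step)
  then have "p \<in> borel_measurable borel" "Lq q p"
    unfolding p_def by blast+
  have fixed_p: "?D p t = p t" for t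
    using fixed by (simp add: p_def)
  show ?thesis
  proof (rule that)
    show "p \<in> borel_measurable borel" "Lq q p"
      by fact+
    show "p t = \<phi> t" if "t \<le> 0" for t
      using fixed_p[of t] that by (simp add: difference_step_def)
    show "p t = delayed_sum p t" if "t \<in> {0<..T}" for t
      using fixed_p[of t] that by (simp add: difference_step_def)
    show "p t = 0" if "max 0 T < t" for t
      using fixed_p[of t] that by (simp add: difference_step_def)
  qed
qed

lemma free_solution_exists_borel:
  assumes "\<phi> \<in> borel_measurable borel" "Lq q \<phi>" "1 \<le> q" "\<And>t. t \<notin> {- \<Lambda> N..0} \<Longrightarrow> \<phi> t = 0"
  obtains x where "x \<in> borel_measurable borel" "Lq q x" "\<And>t. t \<le> 0 \<Longrightarrow> x t = \<phi> t"
    "\<And>t. t \<in> {0<..T} \<Longrightarrow> x t = delayed_sum x t + delay_integral g (\<Lambda> N) x t"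
proof -
  have "0 < q"
    using assms(3) by linarith
  obtain p where p: "p \<in> borel_measurable borel" "Lq q p" "\<And>t. t \<le> 0 \<Longrightarrow> p t = \<phi> t"
    "\<And>t. t \<in> {0<..T} \<Longrightarrow> p t = delayed_sum p t" "\<And>t. max 0 T < t \<Longrightarrow> p t = 0"
    using difference_solution_exists[OF assms(1,2) \<open>0 < q\<close>] by blast
  have p_meas: "p \<in> borel_measurable lebesgue"
    using p(1) by (intro measurable_completion) simp
  have p_int: "integrable lebesgue p"
    using p(2) assms(3)
  proof (rule integrable_Lq_compact_support[where a = "min (- \<Lambda> N) 0" and b = "max 0 T"])
    show "p t = 0" if "t \<notin> {min (- \<Lambda> N) 0..max 0 T}" for t
      using that p(3,5) assms(4) by (cases "t \<le> 0") auto
  qed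
  obtain r where r: "r \<in> bounded_on_horizon"
    "\<And>t. t \<in> {0<..T} \<Longrightarrow> r t = delayed_sum r t + delay_integral g (\<Lambda> N) r t + delay_integral g (\<Lambda> N) p t"
    using bounded_correction_exists[OF borel_measurable_delay_integral[OF p(1)]
        norm_delay_integral_le_L1[OF p_meas p_int]] by blast
  show ?thesis
  proof (rule that[of "\<lambda>t. p t + r t"])
    show "(\<lambda>t. p t + r t) \<in> borel_measurable borel"
      using p(1) r(1) unfolding bounded_on_horizon_def by auto
    show "Lq q (\<lambda>t. p t + r t)"
      using p(2) Lq_if_bounded_on_horizon[OF r(1)] assms(3) by (intro Lq_add) auto
    show "p t + r t = \<phi> t" if "t \<le> 0" for t
      using that p(3) r(1) unfolding bounded_on_horizon_def by auto
    show "p t + r t = delayed_sum (\<lambda>t. p t + r t) t + delay_integral g (\<Lambda> N) (\<lambda>t. p t + r t) t"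
      if "t \<in> {0<..T}" for t
      using that p(4) r(2) p_meas p_int integrable_if_bounded_on_horizon[OF r(1)]
      by (simp add: delayed_sum_add delay_integral_add)
  qed
qed

end

section \<open>Superposition and controllability\<close>

lemma is_solution_add:
  assumes "Linf_on 0 (\<Lambda> N) g" "1 \<le> q"
    and x: "is_solution N \<Lambda> A g B q T \<phi> u x" and y: "is_solution N \<Lambda> A g B q T \<psi> v y"
  shows "is_solution N \<Lambda> A g B q T (\<lambda>\<theta>. \<phi> \<theta> + \<psi> \<theta>) (\<lambda>t. u t + v t) (\<lambda>t. x t + y t)"
proof -
  obtain C where "bounded_kernel g (\<Lambda> N) C"
    using assms(1) by (rule bounded_kernel_if_Linf_on)
  then interpret bounded_kernel g "\<Lambda> N" C .
  have x_Lq: "Lq_on q (- \<Lambda> N) T x" and y_Lq: "Lq_on q (- \<Lambda> N) T y"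
    using x y unfolding is_solution_def by blast+
  have "AE t in lebesgue_on {0..T}. t \<in> {0..T}"
    by (rule AE_I2) simp
  moreover note x[unfolded is_solution_def, THEN conjunct2, THEN conjunct2]
    and y[unfolded is_solution_def, THEN conjunct2, THEN conjunct2]
  ultimately have "AE t in lebesgue_on {0..T}. x t + y t =
      (\<Sum>j=1..N. A j *v (x (t - \<Lambda> j) + y (t - \<Lambda> j)))
      + (\<integral>s. g s *v (x (t - s) + y (t - s)) \<partial>lebesgue_on {0..\<Lambda> N}) + B *v (u t + v t)"
  proof eventually_elim
    case (elim t)
    have "(\<integral>s. g s *v (x (t - s) + y (t - s)) \<partial>lebesgue_on {0..\<Lambda> N})
        = (\<integral>s. g s *v x (t - s) \<partial>lebesgue_on {0..\<Lambda> N}) + (\<integral>s. g s *v y (t - s) \<partial>lebesgue_on {0..\<Lambda> N})"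
      unfolding matrix_vector_right_distrib using elim(1) assms(2) x_Lq y_Lq
      by (intro Bochner_Integration.integral_add integrable_delay_integrand_Lq_on)
    then show ?case
      using elim(2,3) by (simp add: matrix_vector_right_distrib sum.distrib algebra_simps)
  qed
  then show ?thesis
    using x y Lq_on_add[OF x_Lq y_Lq] assms(2) unfolding is_solution_def by simp
qed

lemma free_solution_exists:
  assumes "0 < \<Lambda> 1" "\<And>j. j \<in> {1..N} \<Longrightarrow> \<Lambda> 1 \<le> \<Lambda> j" "Linf_on 0 (\<Lambda> N) g" "1 \<le> q"
    and "Lq_on q (- \<Lambda> N) 0 \<phi>"
  obtains x where "is_solution N \<Lambda> A g B q T \<phi> (\<lambda>_. 0) x"
proof -
  obtain C where "bounded_kernel g (\<Lambda> N) C"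
    using assms(3) by (rule bounded_kernel_if_Linf_on)
  then interpret delay_system N \<Lambda> A g C T
    using assms(1,2) by (simp add: delay_system_def delay_system_axioms_def)
  define \<phi>\<^sub>e where "\<phi>\<^sub>e t = (if t \<in> {- \<Lambda> N..0} then \<phi> t else 0)" for t
  have "Lq q \<phi>\<^sub>e"
    using assms(5) unfolding Lq_on_iff_Lq_zero_extension \<phi>\<^sub>e_def .
  then have \<phi>\<^sub>e_meas: "\<phi>\<^sub>e \<in> borel_measurable lebesgue"
    unfolding Lq_def by blast
  \<comment> \<open>The construction needs Borel initial data: \<open>(t, s) \<mapsto> h (t - s)\<close> is product measurable
    only for Borel \<open>h\<close> (see \<open>borel_measurable_delay_integral\<close>).\<close>
  then obtain \<phi>' where \<phi>': "\<phi>' \<in> borel_measurable borel" "AE t in lebesgue. \<phi>\<^sub>e t = \<phi>' t"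
    by (rule lebesgue_measurable_AE_eq_borel)
  define \<phi>\<^sub>0 where "\<phi>\<^sub>0 t = (if t \<in> {- \<Lambda> N..0} then \<phi>' t else 0)" for t
  have \<phi>\<^sub>0_borel: "\<phi>\<^sub>0 \<in> borel_measurable borel"
    unfolding \<phi>\<^sub>0_def[abs_def] using \<phi>'(1) by measurable
  have \<phi>\<^sub>0_AE: "AE t in lebesgue. \<phi>\<^sub>e t = \<phi>\<^sub>0 t"
    using \<phi>'(2) by eventually_elim (auto simp: \<phi>\<^sub>e_def \<phi>\<^sub>0_def)
  have "\<phi>\<^sub>0 \<in> borel_measurable lebesgue"
    using \<phi>\<^sub>0_borel by (intro measurable_completion) simp
  with \<open>Lq q \<phi>\<^sub>e\<close> \<phi>\<^sub>0_AE have "Lq q \<phi>\<^sub>0"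
    by (rule Lq_cong_AE)
  moreover have "\<phi>\<^sub>0 t = 0" if "t \<notin> {- \<Lambda> N..0}" for t
    using that by (auto simp: \<phi>\<^sub>0_def)
  ultimately obtain x where x: "x \<in> borel_measurable borel" "Lq q x" "\<And>t. t \<le> 0 \<Longrightarrow> x t = \<phi>\<^sub>0 t"
    "\<And>t. t \<in> {0<..T} \<Longrightarrow> x t = delayed_sum x t + delay_integral g (\<Lambda> N) x t"
    using free_solution_exists_borel[OF \<phi>\<^sub>0_borel _ assms(4)] by blast
  have x_meas: "x \<in> borel_measurable lebesgue"
    using x(1) by (intro measurable_completion) simp
  define y where "y t = (if t \<in> {- \<Lambda> N..0} then \<phi> t else x t)" for t
  have y_meas: "y \<in> borel_measurable lebesgue"
  proof -
    have "(\<lambda>t. if t \<in> {- \<Lambda> N..0} then \<phi>\<^sub>e t else x t) \<in> borel_measurable lebesgue"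
      using \<phi>\<^sub>e_meas x_meas by (intro measurable_If_set) auto
    moreover have "(\<lambda>t. if t \<in> {- \<Lambda> N..0} then \<phi>\<^sub>e t else x t) = y"
      by (auto simp: y_def \<phi>\<^sub>e_def)
    ultimately show ?thesis
      by simp
  qed
  have xy: "AE t in lebesgue. x t = y t"
    using \<phi>\<^sub>0_AE
  proof eventually_elim
    case (elim t)
    show ?case
    proof (cases "t \<in> {- \<Lambda> N..0}")
      case True
      then show ?thesis
        using elim x(3)[of t] by (simp add: y_def \<phi>\<^sub>e_def)
    next
      case False
      then show ?thesis
        by (auto simp: y_def)
    qed
  qed
  have "Lq q (\<lambda>t. if t \<in> {- \<Lambda> N..T} then x t else 0)"
    using x(2) by (rule Lq_restrict) simp
  moreover have "AE t in lebesgue. (if t \<in> {- \<Lambda> N..T} then x t else 0) = (if t \<in> {- \<Lambda> N..T} then y t else 0)"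
    using xy by eventually_elim simp
  moreover have "(\<lambda>t. if t \<in> {- \<Lambda> N..T} then y t else 0) \<in> borel_measurable lebesgue"
    using y_meas by (intro measurable_If_set) auto
  ultimately have "Lq_on q (- \<Lambda> N) T y"
    unfolding Lq_on_iff_Lq_zero_extension by (rule Lq_cong_AE)
  moreover have "AE t in lebesgue_on {0..T}. y t = delayed_sum y t + delay_integral g (\<Lambda> N) y t"
  proof -
    have "AE t in lebesgue. x (- \<Lambda> j + 1 * t) = y (- \<Lambda> j + 1 * t)" for j
      by (rule AE_lebesgue_affine[OF xy]) simp
    then have "AE t in lebesgue. \<forall>j\<in>{1..N}. x (t - \<Lambda> j) = y (t - \<Lambda> j)"
      by (intro AE_finite_allI) simp_all
    moreover have "AE t in lebesgue. t \<noteq> 0"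
      by (intro AE_completion AE_lborel_singleton)
    ultimately have "AE t in lebesgue. t \<in> {0..T} \<longrightarrow> y t = delayed_sum y t + delay_integral g (\<Lambda> N) y t"
      using xy
    proof eventually_elim
      case (elim t)
      then show ?case
        using x(4)[of t] delay_integral_cong_AE[OF xy x_meas y_meas, of t]
        by (auto simp: delayed_sum_def)
    qed
    then show ?thesis
      by (subst AE_restrict_space_iff) auto
  qed
  ultimately have "is_solution N \<Lambda> A g B q T \<phi> (\<lambda>_. 0) y"
    unfolding is_solution_def delayed_sum_def delay_integral_def by (simp add: y_def)
  then show ?thesis
    by (rule that)
qed

lemma approx_controllable_if_from_origin:
  fixes A :: "nat \<Rightarrow> real^'d^'d" and B :: "real^'m^'d"
  assumes "0 < \<Lambda> 1" "\<And>j. j \<in> {1..N} \<Longrightarrow> \<Lambda> 1 \<le> \<Lambda> j" "Linf_on 0 (\<Lambda> N) g" "1 \<le> q" "0 \<le> T"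
    and from_origin: "approx_controllable_from_origin N \<Lambda> A g B q T"
  shows "approx_controllable N \<Lambda> A g B q T"
  unfolding approx_controllable_def
proof (intro allI impI)
  fix \<phi> \<psi> :: "real \<Rightarrow> real^'d" and \<epsilon> :: real
  assume \<phi>: "Lq_on q (- \<Lambda> N) 0 \<phi>" and \<psi>: "Lq_on q (- \<Lambda> N) 0 \<psi>" and "0 < \<epsilon>"
  obtain y where y: "is_solution N \<Lambda> A g B q T \<phi> (\<lambda>_. 0) y"
    using free_solution_exists[OF assms(1-4) \<phi>] by blast
  have "Lq_on q (- \<Lambda> N) T y"
    using y unfolding is_solution_def by blast
  then have "Lq_on q (- \<Lambda> N) 0 (\<lambda>\<theta>. \<psi> \<theta> - y (T + \<theta>))"
    using \<psi> assms(4,5) by (intro Lq_on_diff Lq_on_shift) auto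
  then obtain u z where u: "Lq_on q 0 T u" and z: "is_solution N \<Lambda> A g B q T (\<lambda>_. 0) u z"
    and close: "Lq_norm q (- \<Lambda> N) 0 (\<lambda>\<theta>. z (T + \<theta>) - (\<psi> \<theta> - y (T + \<theta>))) < \<epsilon>"
    using from_origin \<open>0 < \<epsilon>\<close> unfolding approx_controllable_from_origin_def by blast
  have "is_solution N \<Lambda> A g B q T \<phi> u (\<lambda>t. y t + z t)"
    using is_solution_add[OF assms(3,4) y z] by simp
  moreover have "(\<lambda>\<theta>. z (T + \<theta>) - (\<psi> \<theta> - y (T + \<theta>))) = (\<lambda>\<theta>. y (T + \<theta>) + z (T + \<theta>) - \<psi> \<theta>)"
    by (simp add: fun_eq_iff algebra_simps)
  then have "Lq_norm q (- \<Lambda> N) 0 (\<lambda>\<theta>. y (T + \<theta>) + z (T + \<theta>) - \<psi> \<theta>) < \<epsilon>"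
    using close by simp
  ultimately show "\<exists>u x. Lq_on q 0 T u \<and> is_solution N \<Lambda> A g B q T \<phi> u x \<and>
      Lq_norm q (- \<Lambda> N) 0 (\<lambda>\<theta>. x (T + \<theta>) - \<psi> \<theta>) < \<epsilon>"
    using u by blast
qed

theorem proposition4:
  fixes N :: nat and \<Lambda> :: "nat \<Rightarrow> real" and A :: "nat \<Rightarrow> real^'d^'d"
    and g :: "real \<Rightarrow> real^'d^'d" and B :: "real^'m^'d" and q T :: real
  assumes "N \<ge> 1"
    and "0 < \<Lambda> 1"
    and "\<And>i j. 1 \<le> i \<Longrightarrow> i < j \<Longrightarrow> j \<le> N \<Longrightarrow> \<Lambda> i < \<Lambda> j"
    and "Linf_on 0 (\<Lambda> N) g"
    and "1 \<le> q"
    and "T > 0"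
  shows "approx_controllable_from_origin N \<Lambda> A g B q T \<longleftrightarrow> approx_controllable N \<Lambda> A g B q T"
proof
  assume "approx_controllable_from_origin N \<Lambda> A g B q T"
  moreover have "\<Lambda> 1 \<le> \<Lambda> j" if "j \<in> {1..N}" for j
    using assms(3)[of 1 j] that by (cases "j = 1") auto
  ultimately show "approx_controllable N \<Lambda> A g B q T"
    using approx_controllable_if_from_origin assms(2,4-6) by (metis less_imp_le)
next
  assume "approx_controllable N \<Lambda> A g B q T"
  moreover have "Lq_on q (- \<Lambda> N) 0 (\<lambda>_. 0 :: real^'d)"
    by (simp add: Lq_on_iff_Lq_zero_extension)
  ultimately show "approx_controllable_from_origin N \<Lambda> A g B q T"
    unfolding approx_controllable_def approx_controllable_from_origin_def by blast
qed

end
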